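(* Let $X$ be a space containing an open subspace $O$ that is almost zero-dimensional, with $O\neq\varnothing$ and $X\setminus O\neq\varnothing$. Then $X$ is not $\sigma$-connected; that is, either $X$ is not connected, or $X$ is the union of countably infinitely many pairwise disjoint non-empty closed subsets.
   Context: All spaces are separable and metrizable. A subset $A$ of $X$ is a C-set in $X$ if it is an intersection of clopen subsets of $X$. A space is almost zero-dimensional if every point has a neighborhood basis consisting of C-sets in it. A connected space is $\sigma$-connected if it cannot be written as the union of $\omega$-many (countably infinitely many) pairwise disjoint non-empty closed subsets. *)

theory Defs
  imports "HOL-Analysis.Analysis"
begin

definition C_set :: "'a topology \<Rightarrow> 'a set \<Rightarrow> bool" where
  "C_set X A \<longleftrightarrow>
     (\<exists>\<U>. (\<forall>U\<in>\<U>. closedin X U \<and> openin X U) \<and> A = topspace X \<inter> \<Inter>\<U>)"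

definition almost_zero_dimensional :: "'a topology \<Rightarrow> bool" where
  "almost_zero_dimensional X \<longleftrightarrow>
     (\<forall>x\<in>topspace X. \<forall>U. openin X U \<and> x \<in> U \<longrightarrow>
        (\<exists>V. C_set X V \<and> x \<in> X interior_of V \<and> V \<subseteq> U))"

definition sigma_connected :: "'a topology \<Rightarrow> bool" where
  "sigma_connected X \<longleftrightarrow> connected_space X \<and>
     \<not> (\<exists>F :: nat \<Rightarrow> 'a set.
          (\<forall>n. closedin X (F n) \<and> F n \<noteq> {}) \<and>
          (\<forall>m n. m \<noteq> n \<longrightarrow> F m \<inter> F n = {}) \<and>
          (\<Union>n. F n) = topspace X)"

end

theory Submission
  imports Defs
begin

(*
  Every point y of U has a neighbourhood (in U) that is a C-set of U; by regularity of X it can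
  be chosen closed in X, and since U is second countable it is the intersection of countably
  many clopen subsets of U.  Countably many such sets V_n cover U (Lindelof).  A set closed in X
  and contained in U, intersected with or cut by a clopen subset of U, stays closed in X; hence
  each V_n minus the earlier V_m, and therefore U itself, splits into countably many pairwise
  disjoint closed subsets of X.  Together with the closed set X - U this is a countable closed
  partition of X with at least two nonempty members.  If infinitely many members are nonempty,
  X is not sigma-connected by definition; otherwise some nonempty proper member is clopen and X
  is not connected.
*)

lemma separable_metrizable_imp_second_countable:
  assumes "separable_space X" "metrizable_space X"
  shows "second_countable X"
proof -
  obtain M d where md: "Metric_space M d" "X = Metric_space.mtopology M d"
    using assms(2) unfolding metrizable_space_def by blast
  interpret Metric_space M d by (rule md(1))
  obtain C where C: "countable C" "mtopology closure_of C = M"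
    using assms(1) unfolding separable_space_def md(2) by auto
  define \<B> where "\<B> = (\<lambda>(c, n). mball c (inverse (Suc n))) ` (C \<times> UNIV)"
  have "\<exists>B\<in>\<B>. x \<in> B \<and> B \<subseteq> W" if W: "openin mtopology W" "x \<in> W" for W x
  proof -
    obtain r where r: "r > 0" "mball x r \<subseteq> W" and x: "x \<in> M"
      using W openin_mtopology by (metis subsetD)
    obtain n where n: "inverse (Suc n) < r / 2"
      using reals_Archimedean[of "r / 2"] r by auto
    have "x \<in> mtopology closure_of C"
      using x C(2) by simp
    then obtain c where c: "c \<in> C" "c \<in> mball x (inverse (Suc n))"
      unfolding metric_closure_of using of_nat_0_less_iff positive_imp_inverse_positive
      by blast
    have "mball c (inverse (Suc n)) \<subseteq> mball x r"
      using c n triangle[of x c] by fastforce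
    moreover have "x \<in> mball c (inverse (Suc n))"
      using c by (simp add: commute)
    moreover have "mball c (inverse (Suc n)) \<in> \<B>"
      unfolding \<B>_def using c by force
    ultimately show ?thesis using r by blast
  qed
  moreover have "countable \<B>" "\<forall>B\<in>\<B>. openin mtopology B"
    unfolding \<B>_def using C(1) by auto
  ultimately show ?thesis
    unfolding second_countable_def md(2) by blast
qed

lemma C_set_closedin:
  assumes "C_set X V"
  shows "closedin X V"
proof -
  obtain \<U> where "\<And>U. U \<in> \<U> \<Longrightarrow> closedin X U" "V = topspace X \<inter> \<Inter>\<U>"
    using assms unfolding C_set_def by blast
  then show ?thesis
    using closedin_Inter[of "insert (topspace X) \<U>" X] by auto
qed

lemma second_countable_C_set_eq_Inter_clopen:
  assumes "second_countable X" "C_set X V"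
  shows "\<exists>c :: nat \<Rightarrow> 'a set. (\<forall>i. closedin X (c i) \<and> openin X (c i)) \<and> V = \<Inter>(range c)"
proof -
  obtain \<U> where \<U>: "\<And>U. U \<in> \<U> \<Longrightarrow> closedin X U \<and> openin X U" "V = topspace X \<inter> \<Inter>\<U>"
    using assms(2) unfolding C_set_def by blast
  let ?S = "topspace X - V"
  have "Lindelof_space (subtopology X ?S)"
    by (intro second_countable_imp_Lindelof_space second_countable_subtopology assms(1))
  moreover have "\<forall>W\<in>(\<lambda>U. topspace X - U) ` \<U>. openin X W" "?S \<subseteq> \<Union>((\<lambda>U. topspace X - U) ` \<U>)"
    using \<U> by auto
  ultimately have "\<exists>\<W>. countable \<W> \<and> \<W> \<subseteq> (\<lambda>U. topspace X - U) ` \<U> \<and> ?S \<subseteq> \<Union>\<W>"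
    unfolding Lindelof_space_subtopology_subset[OF Diff_subset] by blast
  then obtain \<U>' where \<U>': "countable \<U>'" "\<U>' \<subseteq> \<U>" "?S \<subseteq> \<Union>((\<lambda>U. topspace X - U) ` \<U>')"
    unfolding ex_countable_subset_image by blast
  \<comment> \<open>Adding \<open>topspace X\<close> makes the family nonempty, so that \<open>from_nat_into\<close> enumerates it.\<close>
  define \<C> where "\<C> = insert (topspace X) \<U>'"
  have "V = \<Inter>\<C>"
    using \<U>(2) \<U>'(2,3) unfolding \<C>_def by auto
  moreover have "range (from_nat_into \<C>) = \<C>"
    unfolding \<C>_def using \<U>'(1) by simp
  moreover have "closedin X C \<and> openin X C" if "C \<in> \<C>" for C
    using that \<U> \<U>'(2) unfolding \<C>_def by auto
  ultimately show ?thesis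
    by (intro exI[of _ "from_nat_into \<C>"]) auto
qed

lemma almost_zero_dimensional_open_subtopology_closed_C_set:
  assumes "regular_space X" "openin X U" "almost_zero_dimensional (subtopology X U)" "y \<in> U"
  obtains V where "C_set (subtopology X U) V" "closedin X V" "y \<in> subtopology X U interior_of V"
proof -
  have "neighbourhood_base_of (closedin X) X"
    using assms(1) unfolding neighbourhood_base_of_closedin .
  then have "\<exists>W K. openin X W \<and> closedin X K \<and> y \<in> W \<and> W \<subseteq> K \<and> K \<subseteq> U"
    using assms(2,4) unfolding neighbourhood_base_of by blast
  then obtain W K where WK: "openin X W" "closedin X K" "y \<in> W" "W \<subseteq> K" "K \<subseteq> U"
    by blast
  then have "openin (subtopology X U) W"
    by (intro subset_openin_subtopology) auto
  moreover have "y \<in> topspace (subtopology X U)"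
    using assms(2,4) openin_subset by fastforce
  ultimately obtain V where V: "C_set (subtopology X U) V" "y \<in> subtopology X U interior_of V" "V \<subseteq> W"
    using assms(3) WK(3) unfolding almost_zero_dimensional_def by blast
  obtain T where T: "closedin X T" "V = T \<inter> U"
    using C_set_closedin[OF V(1)] unfolding closedin_subtopology by blast
  then have "V = T \<inter> K"
    using WK(4,5) V(3) by blast
  then have "closedin X V"
    using T(1) WK(2) by (simp add: closedin_Int)
  then show thesis
    using V that by blast
qed

lemma almost_zero_dimensional_open_subtopology_closed_Inter_clopen:
  assumes "second_countable X" "regular_space X" "openin X U"
    and "almost_zero_dimensional (subtopology X U)" "y \<in> U"
  shows "\<exists>c :: nat \<Rightarrow> 'a set. (\<forall>i. closedin (subtopology X U) (c i) \<and> openin (subtopology X U) (c i))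
    \<and> closedin X (\<Inter>(range c)) \<and> y \<in> subtopology X U interior_of \<Inter>(range c)"
proof -
  obtain V where V: "C_set (subtopology X U) V" "closedin X V" "y \<in> subtopology X U interior_of V"
    using almost_zero_dimensional_open_subtopology_closed_C_set[OF assms(2-5)] .
  moreover have "\<exists>c :: nat \<Rightarrow> 'a set.
      (\<forall>i. closedin (subtopology X U) (c i) \<and> openin (subtopology X U) (c i)) \<and> V = \<Inter>(range c)"
    by (rule second_countable_C_set_eq_Inter_clopen[OF second_countable_subtopology[OF assms(1)] V(1)])
  ultimately show ?thesis
    by auto
qed

lemma Lindelof_space_countable_interior_cover:
  assumes "Lindelof_space Y" "topspace Y \<noteq> {}"
    and "\<And>y. y \<in> topspace Y \<Longrightarrow> y \<in> Y interior_of V y"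
  shows "\<exists>f :: nat \<Rightarrow> 'a. range f \<subseteq> topspace Y \<and> topspace Y \<subseteq> (\<Union>n. V (f n))"
proof -
  have "\<And>W. W \<in> (\<lambda>y. Y interior_of V y) ` topspace Y \<Longrightarrow> openin Y W"
    by auto
  moreover have "\<Union>((\<lambda>y. Y interior_of V y) ` topspace Y) = topspace Y"
    using assms(3) interior_of_subset_topspace by fastforce
  ultimately have "\<exists>\<V>. countable \<V> \<and> \<V> \<subseteq> (\<lambda>y. Y interior_of V y) ` topspace Y
      \<and> \<Union>\<V> = topspace Y"
    by (rule Lindelof_spaceD[OF assms(1)])
  then obtain T where T: "countable T" "T \<subseteq> topspace Y"
    "\<Union>((\<lambda>y. Y interior_of V y) ` T) = topspace Y"
    unfolding ex_countable_subset_image by blast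
  have "T \<noteq> {}"
    using T(3) assms(2) by (metis SUP_empty)
  then have range_T: "range (from_nat_into T) = T"
    using T(1) by simp
  have "topspace Y \<subseteq> (\<Union>n. V (from_nat_into T n))"
  proof
    fix y assume "y \<in> topspace Y"
    then obtain t where "t \<in> T" "y \<in> Y interior_of V t"
      using T(3) by blast
    moreover obtain n where "from_nat_into T n = t"
      using from_nat_into_surj[OF T(1) \<open>t \<in> T\<close>] by blast
    ultimately show "y \<in> (\<Union>n. V (from_nat_into T n))"
      using interior_of_subset by fast
  qed
  then show ?thesis
    using range_T T(2) by (intro exI[of _ "from_nat_into T"]) auto
qed

lemma almost_zero_dimensional_open_subtopology_UN_Inter_clopen:
  assumes "second_countable X" "regular_space X" "openin X U"
    and "almost_zero_dimensional (subtopology X U)"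
  shows "\<exists>c :: nat \<Rightarrow> nat \<Rightarrow> 'a set.
    (\<forall>n i. closedin (subtopology X U) (c n i) \<and> openin (subtopology X U) (c n i))
    \<and> (\<forall>n. closedin X (\<Inter>(range (c n)))) \<and> U = (\<Union>n. \<Inter>(range (c n)))"
proof (cases "U = {}")
  case True
  then show ?thesis
    by (intro exI[of _ "\<lambda>_ _. {}"]) auto
next
  case False
  let ?Y = "subtopology X U"
  have topspace_Y: "topspace ?Y = U"
    using assms(3) openin_subset by fastforce
  have "\<exists>c :: nat \<Rightarrow> 'a set. (\<forall>i. closedin ?Y (c i) \<and> openin ?Y (c i))
      \<and> closedin X (\<Inter>(range c)) \<and> y \<in> ?Y interior_of \<Inter>(range c)" if "y \<in> U" for y
    using almost_zero_dimensional_open_subtopology_closed_Inter_clopen[OF assms that] .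
  then obtain c' :: "'a \<Rightarrow> nat \<Rightarrow> 'a set"
    where "\<forall>y\<in>U. (\<forall>i. closedin ?Y (c' y i) \<and> openin ?Y (c' y i))
      \<and> closedin X (\<Inter>(range (c' y))) \<and> y \<in> ?Y interior_of \<Inter>(range (c' y))"
    by (metis (no_types))
  then have c': "\<And>y i. y \<in> U \<Longrightarrow> closedin ?Y (c' y i) \<and> openin ?Y (c' y i)"
      "\<And>y. y \<in> U \<Longrightarrow> closedin X (\<Inter>(range (c' y)))"
      "\<And>y. y \<in> U \<Longrightarrow> y \<in> ?Y interior_of \<Inter>(range (c' y))"
    by blast+
  have "Lindelof_space ?Y"
    by (intro second_countable_imp_Lindelof_space second_countable_subtopology assms(1))
  then obtain f :: "nat \<Rightarrow> 'a" where f: "range f \<subseteq> U" "U \<subseteq> (\<Union>n. \<Inter>(range (c' (f n))))"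
    using Lindelof_space_countable_interior_cover[of ?Y "\<lambda>y. \<Inter>(range (c' y))"] c'(3) topspace_Y False
    by auto
  define c where "c n = c' (f n)" for n
  have "\<Inter>(range (c n)) \<subseteq> U" for n
  proof -
    have "c n 0 \<subseteq> topspace ?Y"
      unfolding c_def using c'(1) f(1) by (intro closedin_subset) blast
    then show ?thesis
      using topspace_Y by auto
  qed
  then have "U = (\<Union>n. \<Inter>(range (c n)))"
    using f(2) unfolding c_def by (intro equalityI UN_least)
  moreover have "closedin ?Y (c n i) \<and> openin ?Y (c n i)" "closedin X (\<Inter>(range (c n)))" for n i
    using c'(1,2) f(1) unfolding c_def by blast+
  ultimately show ?thesis
    by blast
qed

definition has_countable_closed_partition :: "'a topology \<Rightarrow> 'a set \<Rightarrow> bool" where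
  "has_countable_closed_partition X S \<longleftrightarrow>
     (\<exists>\<F>. countable \<F> \<and> (\<forall>A\<in>\<F>. closedin X A) \<and> pairwise disjnt \<F> \<and> \<Union>\<F> = S)"

lemma has_countable_closed_partition_closedin:
  "closedin X A \<Longrightarrow> has_countable_closed_partition X A"
  unfolding has_countable_closed_partition_def by (intro exI[of _ "{A}"]) auto

lemma has_countable_closed_partition_UN:
  assumes "countable I" "\<And>i. i \<in> I \<Longrightarrow> has_countable_closed_partition X (S i)"
    and "disjoint_family_on S I"
  shows "has_countable_closed_partition X (\<Union>i\<in>I. S i)"
proof -
  have "\<forall>i\<in>I. \<exists>\<F>. countable \<F> \<and> (\<forall>A\<in>\<F>. closedin X A) \<and> pairwise disjnt \<F> \<and> \<Union>\<F> = S i"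
    using assms(2) unfolding has_countable_closed_partition_def by blast
  then obtain \<F> where "\<forall>i\<in>I. countable (\<F> i) \<and> (\<forall>A\<in>\<F> i. closedin X A)
      \<and> pairwise disjnt (\<F> i) \<and> \<Union>(\<F> i) = S i"
    by metis
  then have countable: "\<And>i. i \<in> I \<Longrightarrow> countable (\<F> i)"
    and closed: "\<And>i A. i \<in> I \<Longrightarrow> A \<in> \<F> i \<Longrightarrow> closedin X A"
    and disjoint: "\<And>i. i \<in> I \<Longrightarrow> pairwise disjnt (\<F> i)"
    and union: "\<And>i. i \<in> I \<Longrightarrow> \<Union>(\<F> i) = S i"
    by blast+
  have "pairwise disjnt (\<Union>i\<in>I. \<F> i)"
  proof (rule pairwiseI)
    fix A B assume "A \<in> (\<Union>i\<in>I. \<F> i)" "B \<in> (\<Union>i\<in>I. \<F> i)" "A \<noteq> B"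
    then obtain i j where ij: "i \<in> I" "j \<in> I" "A \<in> \<F> i" "B \<in> \<F> j" by blast
    show "disjnt A B"
    proof (cases "i = j")
      case True
      then show ?thesis using disjoint[of i] ij \<open>A \<noteq> B\<close> by (simp add: pairwise_def)
    next
      case False
      have "A \<subseteq> S i" "B \<subseteq> S j"
        using union ij by blast+
      then show ?thesis
        using assms(3) ij False unfolding disjoint_family_on_def disjnt_def by blast
    qed
  qed
  moreover have "\<Union>(\<Union>i\<in>I. \<F> i) = (\<Union>i\<in>I. \<Union>(\<F> i))"
    by blast
  ultimately show ?thesis
    unfolding has_countable_closed_partition_def using assms(1) countable closed union
    by (intro exI[of _ "\<Union>i\<in>I. \<F> i"]) auto
qed

lemma closedin_Int_closedin_subtopology:
  assumes "closedin X A" "A \<subseteq> U" "closedin (subtopology X U) C"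
  shows "closedin X (A \<inter> C)"
proof -
  obtain T where "closedin X T" "C = T \<inter> U"
    using assms(3) unfolding closedin_subtopology by blast
  moreover have "A \<inter> (T \<inter> U) = A \<inter> T"
    using assms(2) by blast
  ultimately show ?thesis
    using assms(1) by (simp add: closedin_Int)
qed

lemma closedin_Diff_openin_subtopology:
  assumes "closedin X A" "A \<subseteq> U" "openin (subtopology X U) C"
  shows "closedin X (A - C)"
proof -
  obtain T where "openin X T" "C = T \<inter> U"
    using assms(3) unfolding openin_subtopology by blast
  moreover have "A - T \<inter> U = A - T"
    using assms(2) by blast
  ultimately show ?thesis
    using assms(1) by (simp add: closedin_diff)
qed

lemma has_countable_closed_partition_closedin_Diff_Inter:
  fixes c :: "nat \<Rightarrow> 'a set"
  assumes "closedin X A" "A \<subseteq> U"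
    and clopen: "\<And>i. closedin (subtopology X U) (c i) \<and> openin (subtopology X U) (c i)"
  shows "has_countable_closed_partition X (A - \<Inter>(range c))"
proof -
  define D where "D = disjointed (\<lambda>i. A - c i)"
  have initial_closed: "closedin X (A \<inter> (\<Inter>i<n. c i))" for n
  proof (induction n)
    case (Suc n)
    have "A \<inter> (\<Inter>i<Suc n. c i) = (A \<inter> (\<Inter>i<n. c i)) \<inter> c n"
      by (auto simp: lessThan_Suc)
    moreover have "A \<inter> (\<Inter>i<n. c i) \<subseteq> U"
      using assms(2) by blast
    ultimately show ?case
      using closedin_Int_closedin_subtopology[OF Suc] clopen by simp
  qed (use assms in simp)
  have "closedin X (A \<inter> (\<Inter>i<n. c i) - c n)" for n
    using assms(2) by (intro closedin_Diff_openin_subtopology[OF initial_closed _ conjunct2[OF clopen]]) blast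
  moreover have "D n = A \<inter> (\<Inter>i<n. c i) - c n" for n
    unfolding D_def disjointed_def by auto
  ultimately have "has_countable_closed_partition X (D n)" for n
    by (simp add: has_countable_closed_partition_closedin)
  then have "has_countable_closed_partition X (\<Union>n. D n)"
    using has_countable_closed_partition_UN[where I=UNIV and S=D]
    unfolding D_def by (simp add: disjoint_family_disjointed)
  moreover have "(\<Union>n. D n) = A - \<Inter>(range c)"
    unfolding D_def UN_disjointed_eq by blast
  ultimately show ?thesis
    by simp
qed

lemma has_countable_closed_partition_Diff_Inter:
  fixes c :: "nat \<Rightarrow> 'a set"
  assumes "has_countable_closed_partition X S" "S \<subseteq> U"
    and "\<And>i. closedin (subtopology X U) (c i) \<and> openin (subtopology X U) (c i)"
  shows "has_countable_closed_partition X (S - \<Inter>(range c))"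
proof -
  obtain \<F> where \<F>: "countable \<F>" "\<And>A. A \<in> \<F> \<Longrightarrow> closedin X A" "pairwise disjnt \<F>" "\<Union>\<F> = S"
    using assms(1) unfolding has_countable_closed_partition_def by blast
  have "S - \<Inter>(range c) = (\<Union>A\<in>\<F>. A - \<Inter>(range c))"
    using \<F>(4) by blast
  moreover have "has_countable_closed_partition X (\<Union>A\<in>\<F>. A - \<Inter>(range c))"
  proof (rule has_countable_closed_partition_UN)
    show "has_countable_closed_partition X (A - \<Inter>(range c))" if "A \<in> \<F>" for A
      using that \<F> assms(2,3) by (blast intro: has_countable_closed_partition_closedin_Diff_Inter)
    show "disjoint_family_on (\<lambda>A. A - \<Inter>(range c)) \<F>"
      using \<F>(3) by (auto simp: disjoint_family_on_def pairwise_def disjnt_def)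
  qed (fact \<F>(1))
  ultimately show ?thesis
    by simp
qed

lemma has_countable_closed_partition_UN_Inter:
  fixes c :: "nat \<Rightarrow> nat \<Rightarrow> 'a set"
  assumes closed: "\<And>n. closedin X (\<Inter>(range (c n)))"
    and clopen: "\<And>n i. closedin (subtopology X U) (c n i) \<and> openin (subtopology X U) (c n i)"
  shows "has_countable_closed_partition X (\<Union>n. \<Inter>(range (c n)))"
proof -
  define V where "V n = \<Inter>(range (c n))" for n
  have V_subset: "V n \<subseteq> U" for n
    using closedin_subset[OF conjunct1[OF clopen[of n 0]]] unfolding V_def by auto
  have "has_countable_closed_partition X (V n - (\<Union>i\<in>{0..<m}. V i))" for n m
  proof (induction m)
    case 0
    then show ?case
      using closed by (simp add: V_def has_countable_closed_partition_closedin)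
  next
    case (Suc m)
    have "V n - (\<Union>i\<in>{0..<Suc m}. V i) = (V n - (\<Union>i\<in>{0..<m}. V i)) - \<Inter>(range (c m))"
      by (auto simp: V_def atLeastLessThanSuc)
    moreover have "V n - (\<Union>i\<in>{0..<m}. V i) \<subseteq> U"
      using V_subset by blast
    ultimately show ?case
      using has_countable_closed_partition_Diff_Inter[OF Suc] clopen by simp
  qed
  then have "has_countable_closed_partition X (disjointed V n)" for n
    by (simp add: disjointed_def)
  then have "has_countable_closed_partition X (\<Union>n. disjointed V n)"
    by (intro has_countable_closed_partition_UN) (simp_all add: disjoint_family_disjointed)
  then show ?thesis
    by (simp add: UN_disjointed_eq V_def)
qed

lemma sigma_connected_countable_closed_partition_trivial:
  assumes "sigma_connected X" "countable \<F>" "\<And>A. A \<in> \<F> \<Longrightarrow> closedin X A"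
    and "pairwise disjnt \<F>" "\<Union>\<F> = topspace X" "A \<in> \<F>"
  shows "A = {} \<or> A = topspace X"
proof (cases "finite \<F>")
  case True
  have "B \<inter> A = {}" if "B \<in> \<F> - {A}" for B
    using assms(4,6) that unfolding pairwise_def disjnt_def by blast
  then have "topspace X - A = \<Union>(\<F> - {A})"
    using assms(5) by blast
  then have "closedin X (topspace X - A)"
    using True assms(3) by (auto intro: closedin_Union)
  then have "openin X A"
    using assms(5,6) openin_closedin_eq by blast
  then show ?thesis
    using assms(1,3,6) unfolding sigma_connected_def connected_space_clopen_in by blast
next
  case False
  define G where "G = from_nat_into (\<F> - {{}})"
  have "bij_betw G UNIV (\<F> - {{}})"
    unfolding G_def using False assms(2) by (intro bij_betw_from_nat_into) auto
  then have G: "G n \<in> \<F>" "G n \<noteq> {}" "inj G" "(\<Union>n. G n) = \<Union>(\<F> - {{}})" for n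
    unfolding bij_betw_def by auto
  have "closedin X (G n)" "G n \<noteq> {}" for n
    using G(1,2) assms(3) by auto
  moreover have "G m \<inter> G n = {}" if "m \<noteq> n" for m n
  proof -
    have "G m \<noteq> G n"
      using G(3) that by (simp add: inj_eq)
    then show ?thesis
      using G(1) assms(4) unfolding pairwise_def disjnt_def by blast
  qed
  moreover have "(\<Union>n. G n) = topspace X"
    using G(4) assms(5) by auto
  ultimately have "\<not> sigma_connected X"
    unfolding sigma_connected_def by blast
  then show ?thesis
    using assms(1) by blast
qed

lemma open_countable_closed_partition_imp_not_sigma_connected:
  assumes "openin X U" "has_countable_closed_partition X U" "U \<noteq> {}" "topspace X - U \<noteq> {}"
  shows "\<not> sigma_connected X"
proof
  assume sigma: "sigma_connected X"
  obtain \<F> where \<F>: "countable \<F>" "\<forall>A\<in>\<F>. closedin X A" "pairwise disjnt \<F>" "\<Union>\<F> = U"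
    using assms(2) unfolding has_countable_closed_partition_def by blast
  obtain A where A: "A \<in> \<F>" "A \<noteq> {}"
    using \<F>(4) assms(3) by blast
  let ?\<G> = "insert (topspace X - U) \<F>"
  have "countable ?\<G>"
    using \<F>(1) by simp
  moreover have "closedin X B" if "B \<in> ?\<G>" for B
    using that \<F>(2) assms(1) by blast
  moreover have "pairwise disjnt ?\<G>"
    using \<F>(3,4) unfolding pairwise_insert disjnt_def by blast
  moreover have "\<Union>?\<G> = topspace X"
    using \<F>(4) openin_subset[OF assms(1)] by blast
  ultimately have "A = {} \<or> A = topspace X"
    using sigma_connected_countable_closed_partition_trivial[OF sigma] A(1) by blast
  moreover have "A \<noteq> topspace X"
    using A(1) \<F>(4) assms(4) by blast
  ultimately show False
    using A(2) by blast
qed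

theorem theorem4p11:
  fixes X :: "'a topology" and U :: "'a set"
  assumes "separable_space X" and "metrizable_space X"
    and "openin X U"
    and "almost_zero_dimensional (subtopology X U)"
    and "U \<noteq> {}" and "topspace X - U \<noteq> {}"
  shows "\<not> sigma_connected X"
proof -
  have "second_countable X"
    using assms(1,2) by (rule separable_metrizable_imp_second_countable)
  moreover have "regular_space X"
    using assms(2) by (rule metrizable_imp_regular_space)
  ultimately obtain c :: "nat \<Rightarrow> nat \<Rightarrow> 'a set"
    where "\<forall>n i. closedin (subtopology X U) (c n i) \<and> openin (subtopology X U) (c n i)"
      and "\<forall>n. closedin X (\<Inter>(range (c n)))" and "U = (\<Union>n. \<Inter>(range (c n)))"
    using almost_zero_dimensional_open_subtopology_UN_Inter_clopen[OF _ _ assms(3,4)] by blast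
  then have "has_countable_closed_partition X U"
    using has_countable_closed_partition_UN_Inter[of X c U] by simp
  then show ?thesis
    using open_countable_closed_partition_imp_not_sigma_connected[OF assms(3) _ assms(5,6)] by blast
qed

end
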